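(* Let $a,b,c,p\in\mathbb{C}$ with $-c\notin\mathbb{N}\cup\{0\}$ and $c\neq2$. Suppose that $\cosh(pz)F(a,b;c;z)=\sum_{n=0}^\infty u_nz^n$ for $|z|<1$. Then $u_0=1$, $u_1=\frac{ab}{c}$, $u_2=\frac{(a)_2(b)_2}{2(c)_2}+\frac{p^2}{2}$, $u_3=\frac{abp^2}{2c}+\frac{(a)_3(b)_3}{6(c)_3}$, $u_4=\frac{(a)_2(b)_2p^2}{4(c)_2}+\frac{(a)_4(b)_4}{24(c)_4}+\frac{p^4}{24}$, $u_5=\frac{abp^4}{24c}+\frac{(a)_3(b)_3p^2}{12(c)_3}+\frac{(a)_5(b)_5}{120(c)_5}$, $u_6=\frac{(a)_2(b)_2p^4}{48(c)_2}+\frac{(a)_4(b)_4p^2}{48(c)_4}+\frac{(a)_6(b)_6}{720(c)_6}+\frac{p^6}{720}$, $u_7=\frac{abp^6}{720c}+\frac{(a)_3(b)_3p^4}{144(c)_3}+\frac{(a)_5(b)_5p^2}{240(c)_5}+\frac{(a)_7(b)_7}{5040(c)_7}$, $u_8=\frac{(a)_2(b)_2p^6}{1440(c)_2}+\frac{(a)_4(b)_4p^4}{576(c)_4}+\frac{(a)_6(b)_6p^2}{1440(c)_6}+\frac{(a)_8(b)_8}{40320(c)_8}+\frac{p^8}{40320}$, $u_9=\frac{abp^8}{40320c}+\frac{(a)_3(b)_3p^6}{4320(c)_3}+\frac{(a)_5(b)_5p^4}{2880(c)_5}+\frac{(a)_7(b)_7p^2}{10080(c)_7}+\frac{(a)_9(b)_9}{362880(c)_9}$,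 and for all integers $n\ge9$, \[ u_{n+1}=\sum_{i=0}^9\delta_i(n)u_{n-i}, \] where $D(n)=(c-2)c\,n(n+1)(c+n-1)(c+n)$ and \[ \delta_0(n)=\frac{2(n-1)^2\left(a(c-2b)+c(b+c-3)\right)+4(c-2)(n-1)\left(c(a+b)-ab\right)+2ab(c-2)(c+1)}{(c-2)c(n+1)(c+n)}, \] \[ \begin{aligned} \delta_1(n)=\frac{1}{D(n)}\Big[&-(n-4)(n-3)(n-2)(n-1)\left(a^2+4c(a+b)-10ab+b^2+c^2-6c-4p^2-1\right)\\ &+2(n-3)(n-2)(n-1)\Big(a^2(4b-3c)+a\left(2(b-1)c+4b(b+3)-3c^2\right)-c\left(b(3b+3c+2)+c-4p^2-13\right)\Big)\\ &+(n-2)(n-1)\Big(a^2\left(8b^2+b(4c+6)-6c^2+c\right)+a\left(-(10b+7)c^2+4(b(b+3)+3)c+6b(b+1)\right)\\ &\qquad+c\left(b^2(1-6c)+b(12-7c)+6(c-2)p^2+c+11\right)\Big)\\ &+(c-2)\left(a^2b(c-b(c+2))+ab(b+1)c+c^2(c+1)p^2\right)\\ &+2(n-1)\left(a^2b(b(4c-2)-3(c-1)c)-abc(3b(c-1)+c-5)+(c-2)c(c+1)p^2\right)\Big], \end{aligned} \] \[ \begin{aligned} \delta_2(n)=\frac{2}{D(n)}\Big[&(n-5)(n-4)(n-3)(n-2)\left(a^2+a(c-4b)+(b-1)(b+c+1)-8p^2\right)\\ &+(n-4)(n-3)(n-2)\Big(a^3+a^2(-5b+3c+2)-a\left(b(5b-2c+14)-3c+4p^2+1\right)+(b+3c+1)\left(b^2+b-4p^2-2\right)\Big)\\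 &-(n-3)(n-2)\Big(a^3(b-2c)+a^2(b(10b+9)-4(b+1)c)+a\left(b(b+1)(b-4c+8)+6cp^2+2c\right)\\ &\qquad+2c\left(-b^3-2b^2+3p^2(b+c-3)+b+2\right)\Big)\\ &-(n-2)\Big(a^3b(4b-3c+2)+a^2b(2b+1)(2b-c)-a\left(p^2(10b-3c^2+c)+(b-1)b(b(3c-2)+4c-2)\right)\\ &\qquad+cp^2\left(b(3c-1)+c^2-9\right)\Big)\\ &-(c+1)p^2\left(c^2(2a+2b+1)-3(a+1)(b+1)c+4ab\right)\\ &-(a-1)a(b-1)b\left(-c(a+b+1)+2ab+a+b+1\right)\Big], \end{aligned} \] \[ \begin{aligned} \delta_3(n)=-\frac{1}{D(n)}\Big[&(n-6)(n-5)(n-4)(n-3)\left((a-b)^2-24p^2-1\right)\\ &+2(n-5)(n-4)(n-3)\Big(a^3-a^2(b-2)-a\left(b(b+4)+12p^2+1\right)+b^3+2b^2-12p^2(b+c+1)-b-2\Big)\\ &+(n-4)(n-3)\Big(a^4+a^3(2b+3)-a^2\left(6b^2+3b+6p^2-1\right)+a\left(-12p^2(b+2c)+b(b(2b-3)-8)-3\right)\\ &\qquad-6p^2\left(b^2+4bc+(c-6)c-1\right)+(b+1)^2\left(b^2+b-2\right)+8p^4\Big)\\ &+2(n-3)\Big(-p^2\left(c^2(3a+3b+1)+c(a+b)(3a+3b+2)-40ab-13c\right)+ab(a-b-1)(a-b+1)(a+b)+4cp^4\Big)\\ &+a^4(b-1)b+a^3b(-2b^2+b+1)+a^2\left(b^4+b^3+p^2\left(-12b^2+2b(6c+5)-6c^2+c\right)-3b^2+b\right)\\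 &+ap^2\left(-(6b+7)c^2+4(b(3b+2)+3)c+2b(5b-11)\right)\\ &-a(b-1)^2b(b+1)+cp^2\left(b^2(1-6c)+b(12-7c)+5(c-2)p^2+c+11\right)\Big], \end{aligned} \] \[ \begin{aligned} \delta_4(n)=\frac{2p^2}{D(n)}\Big[&-8(n-7)(n-6)(n-5)(n-4)-4(n-6)(n-5)(n-4)\left(3(a+b+1)+c\right)\\ &+2(n-5)(n-4)\left(8p^2-3(a+b-1)(a+b+c+1)\right)\\ &+(n-4)\Big(-a^3-a^2(3b+3c+2)+a\left(b(-3b-6c+46)-3c+4p^2+1\right)-(b+3c+1)\left(b^2+b-4p^2-2\right)\Big)\\ &+a^3(3b-2c)+a^2(3(5-2b)b-4c)+a\left(p^2(5c-6b)-4bc+3b(b(b+5)-4)+2c\right)\\ &+5cp^2(b+c-3)-2(b-1)(b+1)(b+2)c\Big], \end{aligned} \] \[ \begin{aligned} \delta_5(n)=\frac{p^2}{D(n)}\Big[&4(n-8)(n-7)(n-6)(n-5)+8(n-7)(n-6)(n-5)(a+b+1)\\ &+6(n-6)(n-5)\left((a+b)^2-8p^2-1\right)\\ &-2(n-5)\left(-a^3-3a^2b-2a^2-3ab^2+12p^2(a+b+c+1)+16ab+a-b^3-2b^2+b+2\right)\\ &+a^4+a^3(3-2b)+a^2\left(b(6b-11)-5p^2+1\right)-a\left(2b^3+11b^2-2b(13p^2+6)+20cp^2+3\right)\\ &-5p^2\left(b^2+4bc+(c-6)c-1\right)+(b+1)^2\left(b^2+b-2\right)+4p^4\Big], \end{aligned}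 \] \[ \delta_6(n)=\frac{2p^4\left(5a^2+a(-8b+5c+12n-72)+5b^2+5bc+12b(n-6)+4n(c+4n)-29c-196n-8p^2+595\right)}{D(n)}, \] \[ \delta_7(n)=\frac{p^4\left(-5a^2+2a(b-4n+28)-5b^2-8b(n-7)-8(n-14)n+24p^2-387\right)}{D(n)}, \] \[ \delta_8(n)=-\frac{16p^6}{D(n)},\qquad \delta_9(n)=\frac{4p^6}{D(n)}. \]
   Context: For $a\in\mathbb{C}$, $(a)_n=a(a+1)\cdots(a+n-1)$ denotes the Pochhammer symbol, with $(a)_0=1$. For $a,b,c\in\mathbb{C}$ with $-c\notin\mathbb{N}\cup\{0\}$, the Gaussian hypergeometric function is $F(a,b;c;z)=\sum_{n=0}^\infty \frac{(a)_n(b)_n}{(c)_n\,n!}z^n$, $|z|<1$. *)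

theory Defs
  imports "HOL-Analysis.Analysis"
begin

text \<open>Gaussian hypergeometric series F(a,b;c;z), as a formal sum (meaningful for |z|<1).\<close>
definition hypergeomF :: "complex \<Rightarrow> complex \<Rightarrow> complex \<Rightarrow> complex \<Rightarrow> complex" where
  "hypergeomF a b c z =
     (\<Sum>n. pochhammer a n * pochhammer b n / (pochhammer c n * fact n) * z ^ n)"

definition Dfun :: "complex \<Rightarrow> complex \<Rightarrow> complex \<Rightarrow> complex \<Rightarrow> complex \<Rightarrow> complex" where
  "Dfun a b c p x = (c-2)*c*x*(x+1)*(c+x-1)*(c+x)"

definition delta0 :: "complex \<Rightarrow> complex \<Rightarrow> complex \<Rightarrow> complex \<Rightarrow> complex \<Rightarrow> complex" where
  "delta0 a b c p x =
    (2*(x-1)^2*(a*(c-2*b)+c*(b+c-3)) + 4*(c-2)*(x-1)*(c*(a+b)-a*b) + 2*a*b*(c-2)*(c+1))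
    / ((c-2)*c*(x+1)*(c+x))"

definition delta1 :: "complex \<Rightarrow> complex \<Rightarrow> complex \<Rightarrow> complex \<Rightarrow> complex \<Rightarrow> complex" where
  "delta1 a b c p x = (1 / Dfun a b c p x) *
    ( -(x-4)*(x-3)*(x-2)*(x-1)*(a^2+4*c*(a+b)-10*a*b+b^2+c^2-6*c-4*p^2-1)
      + 2*(x-3)*(x-2)*(x-1)*( a^2*(4*b-3*c) + a*(2*(b-1)*c+4*b*(b+3)-3*c^2)
                              - c*(b*(3*b+3*c+2)+c-4*p^2-13) )
      + (x-2)*(x-1)*( a^2*(8*b^2+b*(4*c+6)-6*c^2+c)
                      + a*(-(10*b+7)*c^2+4*(b*(b+3)+3)*c+6*b*(b+1))
                      + c*(b^2*(1-6*c)+b*(12-7*c)+6*(c-2)*p^2+c+11) )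
      + (c-2)*(a^2*b*(c-b*(c+2)) + a*b*(b+1)*c + c^2*(c+1)*p^2)
      + 2*(x-1)*(a^2*b*(b*(4*c-2)-3*(c-1)*c) - a*b*c*(3*b*(c-1)+c-5) + (c-2)*c*(c+1)*p^2) )"

definition delta2 :: "complex \<Rightarrow> complex \<Rightarrow> complex \<Rightarrow> complex \<Rightarrow> complex \<Rightarrow> complex" where
  "delta2 a b c p x = (2 / Dfun a b c p x) *
    ( (x-5)*(x-4)*(x-3)*(x-2)*(a^2+a*(c-4*b)+(b-1)*(b+c+1)-8*p^2)
      + (x-4)*(x-3)*(x-2)*( a^3 + a^2*(-5*b+3*c+2) - a*(b*(5*b-2*c+14)-3*c+4*p^2+1)
                            + (b+3*c+1)*(b^2+b-4*p^2-2) )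
      - (x-3)*(x-2)*( a^3*(b-2*c) + a^2*(b*(10*b+9)-4*(b+1)*c)
                      + a*(b*(b+1)*(b-4*c+8)+6*c*p^2+2*c)
                      + 2*c*(-(b^3)-2*b^2+3*p^2*(b+c-3)+b+2) )
      - (x-2)*( a^3*b*(4*b-3*c+2) + a^2*b*(2*b+1)*(2*b-c)
                - a*(p^2*(10*b-3*c^2+c)+(b-1)*b*(b*(3*c-2)+4*c-2))
                + c*p^2*(b*(3*c-1)+c^2-9) )
      - (c+1)*p^2*(c^2*(2*a+2*b+1)-3*(a+1)*(b+1)*c+4*a*b)
      - (a-1)*a*(b-1)*b*(-c*(a+b+1)+2*a*b+a+b+1) )"

definition delta3 :: "complex \<Rightarrow> complex \<Rightarrow> complex \<Rightarrow> complex \<Rightarrow> complex \<Rightarrow> complex" where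
  "delta3 a b c p x = -(1 / Dfun a b c p x) *
    ( (x-6)*(x-5)*(x-4)*(x-3)*((a-b)^2-24*p^2-1)
      + 2*(x-5)*(x-4)*(x-3)*( a^3 - a^2*(b-2) - a*(b*(b+4)+12*p^2+1) + b^3 + 2*b^2
                              - 12*p^2*(b+c+1) - b - 2 )
      + (x-4)*(x-3)*( a^4 + a^3*(2*b+3) - a^2*(6*b^2+3*b+6*p^2-1)
                      + a*(-12*p^2*(b+2*c) + b*(b*(2*b-3)-8) - 3)
                      - 6*p^2*(b^2+4*b*c+(c-6)*c-1) + (b+1)^2*(b^2+b-2) + 8*p^4 )
      + 2*(x-3)*( -(p^2)*(c^2*(3*a+3*b+1)+c*(a+b)*(3*a+3*b+2)-40*a*b-13*c)
                  + a*b*(a-b-1)*(a-b+1)*(a+b) + 4*c*p^4 )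
      + a^4*(b-1)*b + a^3*b*(-2*b^2+b+1)
      + a^2*(b^4+b^3+p^2*(-12*b^2+2*b*(6*c+5)-6*c^2+c)-3*b^2+b)
      + a*p^2*(-(6*b+7)*c^2+4*(b*(3*b+2)+3)*c+2*b*(5*b-11))
      - a*(b-1)^2*b*(b+1) + c*p^2*(b^2*(1-6*c)+b*(12-7*c)+5*(c-2)*p^2+c+11) )"

definition delta4 :: "complex \<Rightarrow> complex \<Rightarrow> complex \<Rightarrow> complex \<Rightarrow> complex \<Rightarrow> complex" where
  "delta4 a b c p x = (2*p^2 / Dfun a b c p x) *
    ( -8*(x-7)*(x-6)*(x-5)*(x-4) - 4*(x-6)*(x-5)*(x-4)*(3*(a+b+1)+c)
      + 2*(x-5)*(x-4)*(8*p^2-3*(a+b-1)*(a+b+c+1))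
      + (x-4)*( -(a^3) - a^2*(3*b+3*c+2) + a*(b*(-3*b-6*c+46)-3*c+4*p^2+1)
                - (b+3*c+1)*(b^2+b-4*p^2-2) )
      + a^3*(3*b-2*c) + a^2*(3*(5-2*b)*b-4*c) + a*(p^2*(5*c-6*b)-4*b*c+3*b*(b*(b+5)-4)+2*c)
      + 5*c*p^2*(b+c-3) - 2*(b-1)*(b+1)*(b+2)*c )"

definition delta5 :: "complex \<Rightarrow> complex \<Rightarrow> complex \<Rightarrow> complex \<Rightarrow> complex \<Rightarrow> complex" where
  "delta5 a b c p x = (p^2 / Dfun a b c p x) *
    ( 4*(x-8)*(x-7)*(x-6)*(x-5) + 8*(x-7)*(x-6)*(x-5)*(a+b+1)
      + 6*(x-6)*(x-5)*((a+b)^2-8*p^2-1)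
      - 2*(x-5)*( -(a^3)-3*a^2*b-2*a^2-3*a*b^2+12*p^2*(a+b+c+1)+16*a*b+a-(b^3)-2*b^2+b+2 )
      + a^4 + a^3*(3-2*b) + a^2*(b*(6*b-11)-5*p^2+1)
      - a*(2*b^3+11*b^2-2*b*(13*p^2+6)+20*c*p^2+3)
      - 5*p^2*(b^2+4*b*c+(c-6)*c-1) + (b+1)^2*(b^2+b-2) + 4*p^4 )"

definition delta6 :: "complex \<Rightarrow> complex \<Rightarrow> complex \<Rightarrow> complex \<Rightarrow> complex \<Rightarrow> complex" where
  "delta6 a b c p x =
    2*p^4*(5*a^2+a*(-8*b+5*c+12*x-72)+5*b^2+5*b*c+12*b*(x-6)+4*x*(c+4*x)-29*c-196*x-8*p^2+595)
    / Dfun a b c p x"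

definition delta7 :: "complex \<Rightarrow> complex \<Rightarrow> complex \<Rightarrow> complex \<Rightarrow> complex \<Rightarrow> complex" where
  "delta7 a b c p x =
    p^4*(-5*a^2+2*a*(b-4*x+28)-5*b^2-8*b*(x-7)-8*(x-14)*x+24*p^2-387) / Dfun a b c p x"

definition delta8 :: "complex \<Rightarrow> complex \<Rightarrow> complex \<Rightarrow> complex \<Rightarrow> complex \<Rightarrow> complex" where
  "delta8 a b c p x = -(16*p^6 / Dfun a b c p x)"

definition delta9 :: "complex \<Rightarrow> complex \<Rightarrow> complex \<Rightarrow> complex \<Rightarrow> complex \<Rightarrow> complex" where
  "delta9 a b c p x = 4*p^6 / Dfun a b c p x"

definition delta :: "nat \<Rightarrow> complex \<Rightarrow> complex \<Rightarrow> complex \<Rightarrow> complex \<Rightarrow> complex \<Rightarrow> complex" where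
  "delta i a b c p x =
    [delta0 a b c p x, delta1 a b c p x, delta2 a b c p x, delta3 a b c p x, delta4 a b c p x,
     delta5 a b c p x, delta6 a b c p x, delta7 a b c p x, delta8 a b c p x, delta9 a b c p x] ! i"

end

theory Submission
  imports Defs "HOL-Analysis.FPS_Convergence"
begin

text \<open>
  Write F for the series F(a,b;c;z) and Y = e^(qz) F. Conjugating the hypergeometric equation
  z(1-z)F'' + (c-(a+b+1)z)F' - abF = 0 by e^(qz) replaces F' and F'' by Y' - qY and
  Y'' - 2qY' + q^2 Y, so the coefficients of Y satisfy a recurrence of order three. A polynomial
  combination of eight consecutive instances of it is the recurrence of order ten with the
  coefficients delta_i, and these depend on q only through q^2. Hence both e^(pz) F and e^(-pz) F
  satisfy it, and so does their mean cosh(pz) F, whose coefficients are the u_n by uniqueness of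
  power series. The initial values u_0, ..., u_9 are read off the Cauchy product.
\<close>

definition hypergeom_fps :: "complex \<Rightarrow> complex \<Rightarrow> complex \<Rightarrow> complex fps" where
  "hypergeom_fps a b c =
     Abs_fps (\<lambda>n. pochhammer a n * pochhammer b n / (pochhammer c n * fact n))"

lemma eval_hypergeom_fps: "eval_fps (hypergeom_fps a b c) z = hypergeomF a b c z"
  by (simp add: eval_fps_def hypergeom_fps_def hypergeomF_def)

lemma hypergeom_fps_nth_Suc:
  assumes "\<forall>k::nat. c \<noteq> - of_nat k"
  shows "fps_nth (hypergeom_fps a b c) (Suc n)
           = (a + of_nat n) * (b + of_nat n) / ((c + of_nat n) * (of_nat n + 1))
               * fps_nth (hypergeom_fps a b c) n"
proof -
  have "pochhammer c n \<noteq> 0" "c + of_nat n \<noteq> 0"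
    using assms by (auto simp: pochhammer_eq_0_iff add_eq_0_iff2)
  then show ?thesis
    by (simp add: hypergeom_fps_def pochhammer_Suc fact_Suc field_simps)
qed

lemma LIMSEQ_of_nat_add_divide_of_nat_add:
  "(\<lambda>n. (of_nat n + a) / (of_nat n + b) :: 'a :: real_normed_field) \<longlonglongrightarrow> 1"
proof (rule Lim_transform_eventually)
  have "(\<lambda>n. (1 + a * inverse (of_nat n)) / (1 + b * inverse (of_nat n)))
          \<longlonglongrightarrow> (1 + a * 0) / (1 + b * 0)"
    by (intro tendsto_intros lim_inverse_n) simp
  then show "(\<lambda>n. (1 + a * inverse (of_nat n)) / (1 + b * inverse (of_nat n))) \<longlonglongrightarrow> 1"
    by simp
  show "\<forall>\<^sub>F n in sequentially.
          (1 + a * inverse (of_nat n)) / (1 + b * inverse (of_nat n)) = (of_nat n + a) / (of_nat n + b)"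
    using eventually_gt_at_top[of "0::nat"]
  proof eventually_elim
    case (elim n)
    then have "inverse (of_nat n) \<noteq> (0::'a)" by simp
    moreover have "1 + x * inverse (of_nat n) = (of_nat n + x) * inverse (of_nat n :: 'a)" for x
      using elim by (simp add: distrib_right)
    ultimately show ?case by (metis mult_divide_mult_cancel_right)
  qed
qed

lemma summable_norm_powser_ratio_tendsto_1:
  fixes f r :: "nat \<Rightarrow> 'a :: real_normed_field"
  assumes f_Suc: "\<And>n. f (Suc n) = r n * f n" and r: "r \<longlonglongrightarrow> 1" and z: "norm z < 1"
  shows "summable (\<lambda>n. norm (f n * z ^ n))"
proof -
  define C where "C = (1 + norm z) / 2"
  have "(\<lambda>n. norm (r n) * norm z) \<longlonglongrightarrow> norm (1::'a) * norm z"
    by (intro tendsto_intros r)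
  moreover have "norm z < C" using z by (simp add: C_def)
  ultimately have "\<forall>\<^sub>F n in sequentially. norm (r n) * norm z < C"
    by (intro order_tendstoD(2)) auto
  then obtain N where N: "\<And>n. n \<ge> N \<Longrightarrow> norm (r n) * norm z < C"
    by (auto simp: eventually_sequentially)
  show ?thesis
  proof (rule summable_ratio_test[where N = N])
    show "C < 1" using z by (simp add: C_def)
    show "norm (norm (f (Suc n) * z ^ Suc n)) \<le> C * norm (norm (f n * z ^ n))" if "n \<ge> N" for n
    proof -
      have "norm (f (Suc n) * z ^ Suc n) = (norm (r n) * norm z) * norm (f n * z ^ n)"
        by (simp add: f_Suc norm_mult norm_power)
      also have "\<dots> \<le> C * norm (f n * z ^ n)"
        using N[OF that] by (intro mult_right_mono) auto
      finally show ?thesis by simp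
    qed
  qed
qed

lemma fps_conv_radius_hypergeom_fps:
  assumes "\<forall>k::nat. c \<noteq> - of_nat k"
  shows "fps_conv_radius (hypergeom_fps a b c) \<ge> 1"
  unfolding fps_conv_radius_def
proof (rule conv_radius_geI_ex')
  fix r :: real assume "0 < r" "ereal r < 1"
  have ratio: "(\<lambda>n. (of_nat n + a) / (of_nat n + c) * ((of_nat n + b) / (of_nat n + 1)))
                 \<longlonglongrightarrow> 1 * (1 :: complex)"
    by (intro tendsto_mult LIMSEQ_of_nat_add_divide_of_nat_add)
  have "summable (\<lambda>n. norm (fps_nth (hypergeom_fps a b c) n * of_real r ^ n))"
  proof (rule summable_norm_powser_ratio_tendsto_1)
    show "(\<lambda>n. (a + of_nat n) * (b + of_nat n) / ((c + of_nat n) * (of_nat n + 1))) \<longlonglongrightarrow> 1"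
      using ratio by (simp add: ac_simps)
  qed (use \<open>0 < r\<close> \<open>ereal r < 1\<close> hypergeom_fps_nth_Suc[OF assms] in auto)
  then show "summable (\<lambda>n. fps_nth (hypergeom_fps a b c) n * of_real r ^ n)"
    by (rule summable_norm_cancel)
qed

lemma hypergeom_fps_ode:
  fixes a b c :: complex
  assumes "\<forall>k::nat. c \<noteq> - of_nat k"
  defines "F \<equiv> hypergeom_fps a b c"
  shows "fps_X * (1 - fps_X) * fps_deriv (fps_deriv F)
           + (fps_const c - fps_const (a + b + 1) * fps_X) * fps_deriv F - fps_const (a * b) * F = 0"
proof (rule fps_ext)
  fix n
  have "c + of_nat n \<noteq> 0" "of_nat n + 1 \<noteq> (0::complex)"
    using assms of_nat_neq_0[of n, where 'a = complex] by (auto simp: add_eq_0_iff2 add.commute)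
  then have rec: "(of_nat n + 1) * (of_nat n + c) * fps_nth F (Suc n)
                    = (of_nat n + a) * (of_nat n + b) * fps_nth F n"
    by (simp add: F_def hypergeom_fps_nth_Suc[OF assms(1)] add.commute)
  show "fps_nth (fps_X * (1 - fps_X) * fps_deriv (fps_deriv F)
           + (fps_const c - fps_const (a + b + 1) * fps_X) * fps_deriv F - fps_const (a * b) * F) n
        = fps_nth 0 n"
  proof (cases n)
    case 0
    then show ?thesis using rec by (simp add: algebra_simps)
  next
    case (Suc k)
    then show ?thesis using rec by (cases k) (simp_all add: algebra_simps)
  qed
qed

lemma exp_hypergeom_fps_ode:
  fixes a b c q :: complex
  assumes "\<forall>k::nat. c \<noteq> - of_nat k"
  defines "Y \<equiv> fps_exp q * hypergeom_fps a b c"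
  shows "fps_X * (1 - fps_X)
             * (fps_deriv (fps_deriv Y) - fps_const (2 * q) * fps_deriv Y + fps_const (q^2) * Y)
           + (fps_const c - fps_const (a + b + 1) * fps_X) * (fps_deriv Y - fps_const q * Y)
           - fps_const (a * b) * Y = 0"
proof -
  define F where "F = hypergeom_fps a b c"
  have Y': "fps_deriv Y - fps_const q * Y = fps_exp q * fps_deriv F"
    by (simp add: Y_def F_def algebra_simps)
  have Y'': "fps_deriv (fps_deriv Y) - fps_const (2 * q) * fps_deriv Y + fps_const (q^2) * Y
               = fps_exp q * fps_deriv (fps_deriv F)"
    by (simp add: Y_def F_def algebra_simps power2_eq_square numeral_fps_const
        flip: fps_const_mult)
  show ?thesis
    using arg_cong[OF hypergeom_fps_ode[OF assms(1)], of "\<lambda>G. fps_exp q * G"]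
    unfolding Y' Y'' by (simp add: Y_def F_def algebra_simps)
qed

text \<open>The arguments w0, w1, w2, w3 stand for the coefficients y_(x+1), y_x, y_(x-1), y_(x-2).\<close>

definition exp_hypergeom_residual :: "complex \<Rightarrow> complex \<Rightarrow> complex \<Rightarrow> complex \<Rightarrow> complex \<Rightarrow>
    complex \<Rightarrow> complex \<Rightarrow> complex \<Rightarrow> complex \<Rightarrow> complex" where
  "exp_hypergeom_residual a b c q x w0 w1 w2 w3 =
     (x + 1) * (x + c) * w0 - ((x + a) * (x + b) + q * (2 * x + c)) * w1
       + q * (2 * x - 1 + q + a + b) * w2 - q^2 * w3"

lemma exp_hypergeom_fps_recurrence:
  fixes a b c q :: complex
  assumes "\<forall>k::nat. c \<noteq> - of_nat k"
  defines "y \<equiv> fps_nth (fps_exp q * hypergeom_fps a b c)"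
  shows "exp_hypergeom_residual a b c q (of_nat k + 2) (y (k + 3)) (y (k + 2)) (y (k + 1)) (y k) = 0"
proof -
  define Y where "Y = fps_exp q * hypergeom_fps a b c"
  from arg_cong[OF exp_hypergeom_fps_ode[OF assms(1), where a = a and b = b and q = q,
        folded Y_def], of "\<lambda>G. fps_nth G (k + 2)"]
  show ?thesis
    unfolding exp_hypergeom_residual_def y_def Y_def[symmetric]
    by (simp add: numeral_eq_Suc algebra_simps)
qed

text \<open>Cofactors found by linear elimination with computer algebra.\<close>

definition elimination_cofactor ::
    "nat \<Rightarrow> complex \<Rightarrow> complex \<Rightarrow> complex \<Rightarrow> complex \<Rightarrow> complex \<Rightarrow> complex" where
  "elimination_cofactor j a b c p x =
    [- c*x*(c - 2)*(c + x - 1),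
     a*b*c^2 - 4*a*b*c*x + 4*a*b*c - 4*a*b*x^2 + 16*a*b*x - 16*a*b + 3*a*c^2*x - 4*a*c^2
       + 2*a*c*x^2 - 10*a*c*x + 10*a*c + 3*b*c^2*x - 4*b*c^2 + 2*b*c*x^2 - 10*b*c*x + 10*b*c
       - c^3*p - 2*c^2*p*x + 2*c^2*p + c^2*x^2 - 4*c^2*x + 2*c^2 + 4*c*p*x - 4*c*x^2 + 12*c*x
       - 6*c,
     4*a^2*b^2 - 2*a^2*b*c + 4*a^2*b*x - 10*a^2*b - 3*a^2*c*x + 8*a^2*c - a^2*x^2 + 7*a^2*x
       - 12*a^2 - 2*a*b^2*c + 4*a*b^2*x - 10*a*b^2 - 4*a*b*c*p - 2*a*b*c*x + 6*a*b*c - 8*a*b*p*x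
       + 16*a*b*p + 6*a*b*x^2 - 34*a*b*x + 46*a*b + 3*a*c^2*p + 4*a*c*p*x - 10*a*c*p - 2*a*c*x^2
       + 12*a*c*x - 16*a*c - 3*b^2*c*x + 8*b^2*c - b^2*x^2 + 7*b^2*x - 12*b^2 + 3*b*c^2*p
       + 4*b*c*p*x - 10*b*c*p - 2*b*c*x^2 + 12*b*c*x - 16*b*c - c^2*p^2 + 2*c^2*p*x - c^2*p
       + 4*c*p^2*x - 10*c*p^2 - 8*c*p*x + 6*c*p + 2*c*x^2 - 9*c*x + 8*c + 4*p^2*x^2 - 28*p^2*x
       + 48*p^2 + x^2 - 7*x + 12,
     a^3*b + a^3*x - 4*a^3 - 2*a^2*b^2 + 4*a^2*b*p - a^2*b*x + 4*a^2*b - 3*a^2*c*p - 2*a^2*p*x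
       + 8*a^2*p + a^2*x^2 - 8*a^2*x + 16*a^2 + a*b^3 + 4*a*b^2*p - a*b^2*x + 4*a*b^2
       - 2*a*b*c*p - 8*a*b*p^2 + 12*a*b*p*x - 28*a*b*p - 2*a*b*x^2 + 16*a*b*x - 33*a*b
       + 2*a*c*p^2 - 4*a*c*p*x + 8*a*c*p - 4*a*p^2*x + 16*a*p^2 - a*x + 4*a + b^3*x - 4*b^3
       - 3*b^2*c*p - 2*b^2*p*x + 8*b^2*p + b^2*x^2 - 8*b^2*x + 16*b^2 + 2*b*c*p^2 - 4*b*c*p*x
       + 8*b*c*p - 4*b*p^2*x + 16*b*p^2 - b*x + 4*b + c^2*p^2 + 4*c*p^3 - 8*c*p^2*x + 32*c*p^2
       + 4*c*p*x - 5*c*p + 8*p^3*x - 32*p^3 - 12*p^2*x^2 + 112*p^2*x - 256*p^2 + 2*p*x - 8*p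
       - x^2 + 8*x - 16,
     p*(a^3 - a^2*b - a^2*p + 2*a^2*x - 7*a^2 - a*b^2 + 14*a*b*p - 4*a*b*x + 14*a*b - 2*a*c*p
          - 4*a*p^2 + 8*a*p*x - 44*a*p - a + b^3 - b^2*p + 2*b^2*x - 7*b^2 - 2*b*c*p - 4*b*p^2
          + 8*b*p*x - 44*b*p - b - 8*c*p^2 + 4*c*p*x - 22*c*p + 4*p^3 - 24*p^2*x + 124*p^2
          + 12*p*x^2 - 140*p*x + 405*p - 2*x + 7),
     p^2*(a^2 - 6*a*b + 8*a*p - 4*a*x + 28*a + b^2 + 8*b*p - 4*b*x + 28*b + 4*c*p - 12*p^2
            + 24*p*x - 152*p - 4*x^2 + 56*x - 197),
     - 4*p^3*(a + b - 3*p + 2*x - 15),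
     - 4*p^4] ! j"

lemma Dfun_delta_defect_eq_cofactor_sum:
  fixes w :: "nat \<Rightarrow> complex"
  assumes D: "Dfun a b c p x \<noteq> 0"
  shows "Dfun a b c p x * ((\<Sum>i\<le>9. delta i a b c p x * w (Suc i)) - w 0)
           = (\<Sum>j<8. elimination_cofactor j a b c p x
                  * exp_hypergeom_residual a b c p (x - of_nat j)
                      (w j) (w (j + 1)) (w (j + 2)) (w (j + 3)))"
proof -
  have den0: "(c - 2) * c * (x + 1) * (c + x) \<noteq> 0"
    using D by (simp add: Dfun_def)
  have cancel:
    "Dfun a b c p x * (K / ((c - 2) * c * (x + 1) * (c + x)) * W) = x * (c + x - 1) * K * W"
    "Dfun a b c p x * (k / Dfun a b c p x * K * W) = k * K * W"
    "Dfun a b c p x * (- (k / Dfun a b c p x) * K * W) = - (k * K * W)"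
    "Dfun a b c p x * (K / Dfun a b c p x * W) = K * W"
    "Dfun a b c p x * (- (K / Dfun a b c p x) * W) = - (K * W)" for k K W
    using D den0 by (simp_all add: Dfun_def field_simps)
  show ?thesis
    apply (simp add: eval_nat_numeral delta_def)
    apply (simp only: right_diff_distrib distrib_left)
    apply (simp only: delta0_def delta1_def delta2_def delta3_def delta4_def delta5_def delta6_def
        delta7_def delta8_def delta9_def cancel)
    apply (unfold elimination_cofactor_def nth_Cons_0 nth_Cons_Suc exp_hypergeom_residual_def
        Dfun_def)
    apply algebra
    done
qed

lemma Dfun_of_nat_nonzero:
  assumes "\<forall>k::nat. c \<noteq> - of_nat k" "c \<noteq> 2" "n \<noteq> 0"
  shows "Dfun a b c p (of_nat n) \<noteq> 0"
proof -
  have "c \<noteq> 0" "c + of_nat n \<noteq> 0"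
    using assms(1) by (auto simp: add_eq_0_iff2)
  moreover have "c + of_nat n \<noteq> 1"
  proof
    assume "c + of_nat n = 1"
    then have "c = - of_nat (n - 1)"
      using assms(3) by (simp add: of_nat_diff algebra_simps)
    then show False
      using assms(1) by blast
  qed
  moreover have "of_nat n + 1 \<noteq> (0::complex)"
    using of_nat_neq_0[of n, where 'a = complex] by (simp add: add.commute)
  ultimately show ?thesis
    using assms(2,3) by (simp add: Dfun_def)
qed

lemma delta_recurrence:
  fixes h :: "nat \<Rightarrow> complex"
  assumes hc: "\<forall>k::nat. c \<noteq> - of_nat k" and hc2: "c \<noteq> 2"
    and rec: "\<And>k. exp_hypergeom_residual a b c q (of_nat k + 2)
                      (h (k + 3)) (h (k + 2)) (h (k + 1)) (h k) = 0"
    and n: "9 \<le> n"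
  shows "h (n + 1) = (\<Sum>i\<le>9. delta i a b c q (of_nat n) * h (n - i))"
proof -
  define w where "w k = h (n + 1 - k)" for k
  have "exp_hypergeom_residual a b c q (of_nat n - of_nat j)
          (w j) (w (j + 1)) (w (j + 2)) (w (j + 3)) = 0" if "j < 8" for j
  proof -
    have "of_nat (n - 2 - j) + 2 = (of_nat n - of_nat j :: complex)"
      using n that by (simp add: of_nat_diff)
    moreover have "n - 2 - j + 3 = n + 1 - j" "n - 2 - j + 2 = n + 1 - (j + 1)"
      "n - 2 - j + 1 = n + 1 - (j + 2)" "n - 2 - j = n + 1 - (j + 3)"
      using n that by simp_all
    ultimately show ?thesis
      using rec[of "n - 2 - j"] by (simp add: w_def)
  qed
  moreover have D: "Dfun a b c q (of_nat n) \<noteq> 0"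
    using n by (intro Dfun_of_nat_nonzero hc hc2) simp
  ultimately have
    "Dfun a b c q (of_nat n) * ((\<Sum>i\<le>9. delta i a b c q (of_nat n) * w (Suc i)) - w 0) = 0"
    unfolding Dfun_delta_defect_eq_cofactor_sum[OF D] by (intro sum.neutral) simp
  then show ?thesis
    using D by (simp add: w_def)
qed

lemma delta_uminus: "delta i a b c (- p) x = delta i a b c p x"
  by (simp add: delta_def delta0_def delta1_def delta2_def delta3_def delta4_def delta5_def
      delta6_def delta7_def delta8_def delta9_def Dfun_def)

lemma Abs_fps_eq_if_sums_eval_fps:
  fixes f :: "complex fps" and u :: "nat \<Rightarrow> complex"
  assumes r: "0 < r" and f: "fps_conv_radius f > 0"
    and u: "\<And>z. norm z < r \<Longrightarrow> (\<lambda>n. u n * z ^ n) sums eval_fps f z"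
  shows "Abs_fps u = f"
proof (rule eval_fps_eqD)
  have "conv_radius u \<ge> r"
  proof (rule conv_radius_geI_ex')
    fix \<rho> :: real assume "0 < \<rho>" "ereal \<rho> < ereal r"
    then show "summable (\<lambda>n. u n * of_real \<rho> ^ n)"
      using u[of "of_real \<rho>"] by (auto intro: sums_summable)
  qed
  then show "fps_conv_radius (Abs_fps u) > 0"
    using r by (simp add: fps_conv_radius_def less_le_trans[of 0 "ereal r"])
  have "\<forall>\<^sub>F z in nhds 0. z \<in> ball 0 r"
    using r by (intro eventually_nhds_in_open) auto
  then show "\<forall>\<^sub>F z in nhds 0. eval_fps (Abs_fps u) z = eval_fps f z"
    by eventually_elim (use u in \<open>simp add: eval_fps_def sums_iff\<close>)
qed (rule f)

lemma cosh_hypergeom_coeffs: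
  fixes a b c p :: complex and u :: "nat \<Rightarrow> complex"
  assumes hc: "\<forall>k::nat. c \<noteq> - of_nat k"
    and hu: "\<forall>z::complex. norm z < 1 \<longrightarrow> (\<lambda>n. u n * z ^ n) sums (cosh (p * z) * hypergeomF a b c z)"
  shows "u n = (fps_nth (fps_exp p * hypergeom_fps a b c) n
                 + fps_nth (fps_exp (- p) * hypergeom_fps a b c) n) / 2"
proof -
  define C where "C = fps_const (1 / 2) * (fps_exp p + fps_exp (- p))"
  have C: "fps_conv_radius C = \<infinity>" "eval_fps C z = cosh (p * z)" for z
    using fps_conv_radius_add[of "fps_exp p" "fps_exp (- p)"]
      fps_conv_radius_mult[of "fps_const (1/2)" "fps_exp p + fps_exp (- p)"]
    by (simp_all add: C_def eval_fps_mult eval_fps_add cosh_field_def)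
  have F: "fps_conv_radius (hypergeom_fps a b c) \<ge> 1"
    by (rule fps_conv_radius_hypergeom_fps[OF hc])
  have "Abs_fps u = C * hypergeom_fps a b c"
  proof (rule Abs_fps_eq_if_sums_eval_fps[where r = 1])
    have "1 \<le> fps_conv_radius (C * hypergeom_fps a b c)"
      using fps_conv_radius_mult[of C "hypergeom_fps a b c"] C(1) F by simp
    then show "fps_conv_radius (C * hypergeom_fps a b c) > 0"
      by (rule less_le_trans[rotated]) simp
    show "(\<lambda>n. u n * z ^ n) sums eval_fps (C * hypergeom_fps a b c) z" if "norm z < 1" for z
      using hu that F C by (simp add: eval_fps_mult eval_hypergeom_fps less_le_trans[of _ 1])
  qed simp
  then have "u n = fps_nth (C * hypergeom_fps a b c) n"
    by (metis fps_nth_Abs_fps)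
  then show ?thesis
    by (simp add: C_def mult.assoc distrib_right)
qed

theorem theorem3p11:
  fixes a b c p :: complex and u :: "nat \<Rightarrow> complex"
  assumes hc: "\<forall>k::nat. c \<noteq> - of_nat k"
    and hc2: "c \<noteq> 2"
    and hu: "\<forall>z::complex. norm z < 1 \<longrightarrow> (\<lambda>n. u n * z ^ n) sums (cosh (p * z) * hypergeomF a b c z)"
  shows "(u 0 = 1)
    \<and> (u 1 = a * b / c)
    \<and> (u 2 = pochhammer a 2 * pochhammer b 2 / (2 * pochhammer c 2) + p^2 / 2)
    \<and> (u 3 = a * b * p^2 / (2 * c) + pochhammer a 3 * pochhammer b 3 / (6 * pochhammer c 3))
    \<and> (u 4 = pochhammer a 2 * pochhammer b 2 * p^2 / (4 * pochhammer c 2)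
             + pochhammer a 4 * pochhammer b 4 / (24 * pochhammer c 4) + p^4 / 24)
    \<and> (u 5 = a * b * p^4 / (24 * c)
             + pochhammer a 3 * pochhammer b 3 * p^2 / (12 * pochhammer c 3)
             + pochhammer a 5 * pochhammer b 5 / (120 * pochhammer c 5))
    \<and> (u 6 = pochhammer a 2 * pochhammer b 2 * p^4 / (48 * pochhammer c 2)
             + pochhammer a 4 * pochhammer b 4 * p^2 / (48 * pochhammer c 4)
             + pochhammer a 6 * pochhammer b 6 / (720 * pochhammer c 6) + p^6 / 720)
    \<and> (u 7 = a * b * p^6 / (720 * c)
             + pochhammer a 3 * pochhammer b 3 * p^4 / (144 * pochhammer c 3)
             + pochhammer a 5 * pochhammer b 5 * p^2 / (240 * pochhammer c 5)
             + pochhammer a 7 * pochhammer b 7 / (5040 * pochhammer c 7))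
    \<and> (u 8 = pochhammer a 2 * pochhammer b 2 * p^6 / (1440 * pochhammer c 2)
             + pochhammer a 4 * pochhammer b 4 * p^4 / (576 * pochhammer c 4)
             + pochhammer a 6 * pochhammer b 6 * p^2 / (1440 * pochhammer c 6)
             + pochhammer a 8 * pochhammer b 8 / (40320 * pochhammer c 8) + p^8 / 40320)
    \<and> (u 9 = a * b * p^8 / (40320 * c)
             + pochhammer a 3 * pochhammer b 3 * p^6 / (4320 * pochhammer c 3)
             + pochhammer a 5 * pochhammer b 5 * p^4 / (2880 * pochhammer c 5)
             + pochhammer a 7 * pochhammer b 7 * p^2 / (10080 * pochhammer c 7)
             + pochhammer a 9 * pochhammer b 9 / (362880 * pochhammer c 9))
    \<and> (\<forall>n::nat. n \<ge> 9 \<longrightarrow>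
           u (n + 1) = (\<Sum>i\<le>9. delta i a b c p (of_nat n) * u (n - i)))"
proof -
  let ?y = "\<lambda>q. fps_nth (fps_exp q * hypergeom_fps a b c)"
  have u: "u n = (?y p n + ?y (- p) n) / 2" for n
    by (rule cosh_hypergeom_coeffs[OF hc hu])
  have y_rec: "?y q (n + 1) = (\<Sum>i\<le>9. delta i a b c p (of_nat n) * ?y q (n - i))"
    if "9 \<le> n" "q = p \<or> q = - p" for q n
    using delta_recurrence[OF hc hc2 exp_hypergeom_fps_recurrence[OF hc] that(1), of q] that(2)
    by (auto simp: delta_uminus)
  have "u (n + 1) = (\<Sum>i\<le>9. delta i a b c p (of_nat n) * u (n - i))" if "9 \<le> n" for n
    using y_rec[OF that]
    by (simp add: u sum.distrib sum_divide_distrib ring_distribs add_divide_distrib)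
  moreover have "pochhammer c k \<noteq> 0" for k
    using hc by (auto simp: pochhammer_eq_0_iff)
  ultimately show ?thesis
    by (simp add: u fps_mult_nth hypergeom_fps_def eval_nat_numeral field_simps)
qed

end
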